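(* Let $(X,\tau)$ be a topological space, $\mathcal{V}\in T(\tau)$, $\mathcal{B}=\mathcal{B}(\mathcal{V}_\omega)$, and let $U\in\mathcal{V}$ be a transitive entourage. Then $U(A)\in\mathcal{B}$ for every $A\subseteq X$.
   Context: Quasi-uniformities and quasi-proximities are in the sense of Fletcher–Lindgren. For a quasi-uniformity $\mathcal{V}$, $\delta(\mathcal{V})$ is the induced quasi-proximity; $\pi(\delta)$ is the set of quasi-uniformities inducing $\delta$, and $\mathcal{V}_\omega$ denotes the coarsest element of $\pi(\delta(\mathcal{V}))$ (it is totally bounded). $T(\tau)$ is the set of compatible transitive quasi-uniformities on $(X,\tau)$ (transitive = having a base of entourages $U$ with $U\circ U\subseteq U$). For $U\subseteq X\times X$ and $A\subseteq X$, $U(x)=\{y:(x,y)\in U\}$ and $U(A)=\bigcup_{a\in A}U(a)$. For $N\subseteq X$, $U_N=(N\times N)\cup((X\setminus N)\times X)$, and for a compatible quasi-uniformity $\mathcal{W}$, $\mathcal{B}(\mathcal{W})=\{N\in\tau:U_N\in\mathcal{W}\}$. *)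

theory Defs
  imports "HOL-Analysis.Analysis"
begin

definition quasi_uniformity :: "'a set \<Rightarrow> ('a \<times> 'a) set set \<Rightarrow> bool" where
  "quasi_uniformity X \<U> \<longleftrightarrow>
     \<U> \<noteq> {} \<and>
     (\<forall>U\<in>\<U>. Id_on X \<subseteq> U \<and> U \<subseteq> X \<times> X) \<and>
     (\<forall>U V. U \<in> \<U> \<and> U \<subseteq> V \<and> V \<subseteq> X \<times> X \<longrightarrow> V \<in> \<U>) \<and>
     (\<forall>U\<in>\<U>. \<forall>V\<in>\<U>. U \<inter> V \<in> \<U>) \<and>
     (\<forall>U\<in>\<U>. \<exists>V\<in>\<U>. V O V \<subseteq> U)"

definition qu_compatible :: "'a topology \<Rightarrow> ('a \<times> 'a) set set \<Rightarrow> bool" where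
  "qu_compatible \<tau> \<U> \<longleftrightarrow>
     (\<forall>G. openin \<tau> G \<longleftrightarrow> G \<subseteq> topspace \<tau> \<and> (\<forall>x\<in>G. \<exists>U\<in>\<U>. U `` {x} \<subseteq> G))"

definition qu_transitive :: "('a \<times> 'a) set set \<Rightarrow> bool" where
  "qu_transitive \<U> \<longleftrightarrow> (\<forall>U\<in>\<U>. \<exists>V\<in>\<U>. V O V \<subseteq> V \<and> V \<subseteq> U)"

definition Tqu :: "'a topology \<Rightarrow> ('a \<times> 'a) set set set" where
  "Tqu \<tau> = {\<U>. quasi_uniformity (topspace \<tau>) \<U> \<and> qu_compatible \<tau> \<U> \<and> qu_transitive \<U>}"

definition qprox :: "'a set \<Rightarrow> ('a \<times> 'a) set set \<Rightarrow> ('a set \<times> 'a set) set" where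
  "qprox X \<U> = {(A, B). A \<subseteq> X \<and> B \<subseteq> X \<and> (\<forall>U\<in>\<U>. (A \<times> B) \<inter> U \<noteq> {})}"

definition qprox_class :: "'a set \<Rightarrow> ('a set \<times> 'a set) set \<Rightarrow> ('a \<times> 'a) set set set" where
  "qprox_class X \<delta> = {\<W>. quasi_uniformity X \<W> \<and> qprox X \<W> = \<delta>}"

definition qu_omega :: "'a set \<Rightarrow> ('a \<times> 'a) set set \<Rightarrow> ('a \<times> 'a) set set" where
  "qu_omega X \<V> = (THE \<W>. \<W> \<in> qprox_class X (qprox X \<V>) \<and>
                          (\<forall>\<W>'\<in>qprox_class X (qprox X \<V>). \<W> \<subseteq> \<W>'))"

definition UN_ent :: "'a set \<Rightarrow> 'a set \<Rightarrow> ('a \<times> 'a) set" where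
  "UN_ent X N = (N \<times> N) \<union> ((X - N) \<times> X)"

definition Bset :: "'a topology \<Rightarrow> ('a \<times> 'a) set set \<Rightarrow> 'a set set" where
  "Bset \<tau> \<W> = {N. openin \<tau> N \<and> UN_ent (topspace \<tau>) N \<in> \<W>}"

end

theory Submission
  imports Defs
begin

text \<open>The coarsest quasi-uniformity inducing \<open>\<delta>(\<V>)\<close> is the filter generated by the entourages
  \<open>(X - A) \<times> X \<union> X \<times> (X - B)\<close> for the pairs \<open>(A, B)\<close> that are far, i.e. not \<open>\<delta>\<close>-related.
  Every quasi-uniformity inducing \<open>\<delta>\<close> contains these entourages; the generated filter is itself a
  quasi-uniformity, and a finite-cover argument shows that it separates no further pairs. For a
  transitive \<open>U\<close> the set \<open>N = U(A)\<close> is open and \<open>(N, X - N)\<close> is far, and the generating entourage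
  of this pair is exactly \<open>U\<^sub>N\<close>.\<close>

lemma quasi_uniformityD:
  assumes "quasi_uniformity X \<W>"
  shows "\<W> \<noteq> {}"
    and "\<forall>U\<in>\<W>. Id_on X \<subseteq> U \<and> U \<subseteq> X \<times> X"
    and "\<forall>U V. U \<in> \<W> \<and> U \<subseteq> V \<and> V \<subseteq> X \<times> X \<longrightarrow> V \<in> \<W>"
    and "\<forall>U\<in>\<W>. \<forall>V\<in>\<W>. U \<inter> V \<in> \<W>"
    and "\<forall>U\<in>\<W>. \<exists>V\<in>\<W>. V O V \<subseteq> U"
  using assms unfolding quasi_uniformity_def by - (elim conjE; assumption)+

lemma quasi_uniformity_subset: "quasi_uniformity X \<W> \<Longrightarrow> U \<in> \<W> \<Longrightarrow> U \<subseteq> X \<times> X"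
  using quasi_uniformityD(2) by blast

lemma quasi_uniformity_refl: "quasi_uniformity X \<W> \<Longrightarrow> U \<in> \<W> \<Longrightarrow> Id_on X \<subseteq> U"
  using quasi_uniformityD(2) by blast

lemma quasi_uniformity_mono:
  "quasi_uniformity X \<W> \<Longrightarrow> U \<in> \<W> \<Longrightarrow> U \<subseteq> V \<Longrightarrow> V \<subseteq> X \<times> X \<Longrightarrow> V \<in> \<W>"
  using quasi_uniformityD(3) by blast

lemma quasi_uniformity_Int: "quasi_uniformity X \<W> \<Longrightarrow> U \<in> \<W> \<Longrightarrow> V \<in> \<W> \<Longrightarrow> U \<inter> V \<in> \<W>"
  using quasi_uniformityD(4) by blast

lemma quasi_uniformity_sqrt: "quasi_uniformity X \<W> \<Longrightarrow> U \<in> \<W> \<Longrightarrow> \<exists>V\<in>\<W>. V O V \<subseteq> U"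
  using quasi_uniformityD(5) by (rule bspec)

lemma quasi_uniformity_UNIV:
  assumes "quasi_uniformity X \<W>"
  shows "X \<times> X \<in> \<W>"
proof -
  obtain U where "U \<in> \<W>" using quasi_uniformityD(1)[OF assms] by blast
  then show ?thesis
    using quasi_uniformity_mono[OF assms _ quasi_uniformity_subset[OF assms] order_refl] by blast
qed

lemma finite_INT_closed:
  assumes "X \<times> X \<in> \<W>" and "\<And>U V. U \<in> \<W> \<Longrightarrow> V \<in> \<W> \<Longrightarrow> U \<inter> V \<in> \<W>"
    and "finite F" and "\<And>p. p \<in> F \<Longrightarrow> g p \<in> \<W>"
  shows "X \<times> X \<inter> (\<Inter>p\<in>F. g p) \<in> \<W>"
  using assms(3,4)
proof (induction F rule: finite_induct)
  case (insert p F)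
  then have "g p \<inter> (X \<times> X \<inter> (\<Inter>p\<in>F. g p)) \<in> \<W>" using assms(2) by blast
  then show ?case by (simp add: Int_left_commute)
qed (simp add: assms(1))

lemma relcomp_INT_subset:
  assumes "\<And>p. p \<in> F \<Longrightarrow> g p O g p \<subseteq> S p"
  shows "(X \<times> X \<inter> (\<Inter>p\<in>F. g p)) O (X \<times> X \<inter> (\<Inter>p\<in>F. g p)) \<subseteq> X \<times> X \<inter> (\<Inter>p\<in>F. S p)"
  using assms by blast

definition far :: "'a set \<Rightarrow> ('a \<times> 'a) set set \<Rightarrow> ('a set \<times> 'a set) set" where
  "far X \<V> = {(A, B). A \<subseteq> X \<and> B \<subseteq> X \<and> (\<exists>U\<in>\<V>. (A \<times> B) \<inter> U = {})}"

lemma far_conv_qprox: "far X \<V> = {(A, B). A \<subseteq> X \<and> B \<subseteq> X \<and> (A, B) \<notin> qprox X \<V>}"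
  unfolding far_def qprox_def by auto

lemma qprox_conv_far: "qprox X \<V> = {(A, B). A \<subseteq> X \<and> B \<subseteq> X \<and> (A, B) \<notin> far X \<V>}"
  unfolding far_def qprox_def by auto

lemma far_eq_if_qprox_eq: "qprox X \<W> = qprox X \<V> \<Longrightarrow> far X \<W> = far X \<V>"
  by (simp add: far_conv_qprox)

lemma qprox_eq_if_far_eq: "far X \<W> = far X \<V> \<Longrightarrow> qprox X \<W> = qprox X \<V>"
  by (simp add: qprox_conv_far)

lemma far_subset: "(A, B) \<in> far X \<V> \<Longrightarrow> A \<subseteq> X \<and> B \<subseteq> X"
  unfolding far_def by blast

lemma far_mono: "(A, B) \<in> far X \<V> \<Longrightarrow> A' \<subseteq> A \<Longrightarrow> B' \<subseteq> B \<Longrightarrow> (A', B') \<in> far X \<V>"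
  unfolding far_def by blast

lemma far_disjoint: "quasi_uniformity X \<V> \<Longrightarrow> (A, B) \<in> far X \<V> \<Longrightarrow> A \<inter> B = {}"
  unfolding far_def using quasi_uniformity_refl by fastforce

lemma far_Times_empty:
  "quasi_uniformity X \<V> \<Longrightarrow> A \<subseteq> X \<Longrightarrow> B \<subseteq> X \<Longrightarrow> A \<times> B = {} \<Longrightarrow> (A, B) \<in> far X \<V>"
  unfolding far_def using quasi_uniformity_UNIV by blast

lemma far_Un_left:
  assumes "quasi_uniformity X \<V>" "(A1, B) \<in> far X \<V>" "(A2, B) \<in> far X \<V>"
  shows "(A1 \<union> A2, B) \<in> far X \<V>"
proof -
  obtain U1 U2 where "U1 \<in> \<V>" "U2 \<in> \<V>" "(A1 \<times> B) \<inter> U1 = {}" "(A2 \<times> B) \<inter> U2 = {}"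
    using assms(2,3) unfolding far_def by blast
  with quasi_uniformity_Int[OF assms(1)] show ?thesis
    using assms(2,3) unfolding far_def by (auto intro!: bexI[of _ "U1 \<inter> U2"])
qed

lemma far_Un_right:
  assumes "quasi_uniformity X \<V>" "(A, B1) \<in> far X \<V>" "(A, B2) \<in> far X \<V>"
  shows "(A, B1 \<union> B2) \<in> far X \<V>"
proof -
  obtain U1 U2 where "U1 \<in> \<V>" "U2 \<in> \<V>" "(A \<times> B1) \<inter> U1 = {}" "(A \<times> B2) \<inter> U2 = {}"
    using assms(2,3) unfolding far_def by blast
  with quasi_uniformity_Int[OF assms(1)] show ?thesis
    using assms(2,3) unfolding far_def by (auto intro!: bexI[of _ "U1 \<inter> U2"])
qed

lemma Times_subset_Un_Times:
  assumes "A \<times> B \<subseteq> C \<times> D \<union> R"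
  shows "(A - C) \<times> B \<subseteq> R" and "(A \<inter> C) \<times> (B - D) \<subseteq> R"
  using assms by blast+

lemma far_if_covered:
  assumes qu: "quasi_uniformity X \<V>" and "finite F" and "F \<subseteq> far X \<V>"
    and "A \<subseteq> X" and "B \<subseteq> X" and "A \<times> B \<subseteq> (\<Union>(C, D)\<in>F. C \<times> D)"
  shows "(A, B) \<in> far X \<V>"
  using assms(2-)
proof (induction F arbitrary: A B rule: finite_induct)
  case empty
  then show ?case using far_Times_empty[OF qu] by simp
next
  case (insert p F)
  obtain C D where p: "p = (C, D)" by force
  have CD: "(C, D) \<in> far X \<V>" using insert.prems(1) p by simp
  have F: "F \<subseteq> far X \<V>" using insert.prems(1) by simp
  have cover: "A \<times> B \<subseteq> C \<times> D \<union> (\<Union>(C, D)\<in>F. C \<times> D)" using insert.prems(4) p by simp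
  have "A - C \<subseteq> X" "A \<inter> C \<subseteq> X" "B - D \<subseteq> X" using insert.prems(2,3) by blast+
  then have outside_C: "(A - C, B) \<in> far X \<V>" and outside_D: "(A \<inter> C, B - D) \<in> far X \<V>"
    using insert.prems(3) Times_subset_Un_Times[OF cover] by (auto intro: insert.IH[OF F])
  have "(A \<inter> C, B \<inter> D) \<in> far X \<V>" using CD by (rule far_mono) blast+
  then have "(A \<inter> C, (B \<inter> D) \<union> (B - D)) \<in> far X \<V>" using outside_D by (rule far_Un_right[OF qu])
  then have "(A \<inter> C, B) \<in> far X \<V>" by (simp add: Int_Diff_Un)
  with outside_C have "((A - C) \<union> (A \<inter> C), B) \<in> far X \<V>" by (rule far_Un_left[OF qu])
  then show ?case by (simp add: Un_Diff_Int)
qed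

definition far_entourage :: "'a set \<Rightarrow> 'a set \<Rightarrow> 'a set \<Rightarrow> ('a \<times> 'a) set" where
  "far_entourage X A B = ((X - A) \<times> X) \<union> (X \<times> (X - B))"

lemma far_entourage_subset: "far_entourage X A B \<subseteq> X \<times> X"
  unfolding far_entourage_def by blast

lemma far_entourage_disjoint: "(A \<times> B) \<inter> far_entourage X A B = {}"
  unfolding far_entourage_def by blast

lemma far_entourage_complement: "N \<subseteq> X \<Longrightarrow> far_entourage X N (X - N) = UN_ent X N"
  unfolding far_entourage_def UN_ent_def by blast

lemma far_entourage_mem:
  assumes qu: "quasi_uniformity X \<W>" and "qprox X \<W> = qprox X \<V>" and "(A, B) \<in> far X \<V>"
  shows "far_entourage X A B \<in> \<W>"
proof -
  have "(A, B) \<in> far X \<W>" using far_eq_if_qprox_eq[OF assms(2)] assms(3) by simp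
  then obtain U where U: "U \<in> \<W>" "(A \<times> B) \<inter> U = {}" unfolding far_def by blast
  have "U \<subseteq> far_entourage X A B"
    using U(2) quasi_uniformity_subset[OF qu U(1)] unfolding far_entourage_def by blast
  then show ?thesis by (rule quasi_uniformity_mono[OF qu U(1) _ far_entourage_subset])
qed

definition far_generated :: "'a set \<Rightarrow> ('a \<times> 'a) set set \<Rightarrow> ('a \<times> 'a) set set" where
  "far_generated X \<V> = {W. W \<subseteq> X \<times> X \<and> (\<exists>F. finite F \<and> F \<subseteq> far X \<V> \<and>
      X \<times> X \<inter> (\<Inter>(A, B)\<in>F. far_entourage X A B) \<subseteq> W)}"

lemma far_generatedI:
  "W \<subseteq> X \<times> X \<Longrightarrow> finite F \<Longrightarrow> F \<subseteq> far X \<V> \<Longrightarrow>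
    X \<times> X \<inter> (\<Inter>(A, B)\<in>F. far_entourage X A B) \<subseteq> W \<Longrightarrow> W \<in> far_generated X \<V>"
  unfolding far_generated_def by blast

lemma far_generatedE:
  assumes "W \<in> far_generated X \<V>"
  obtains F where "W \<subseteq> X \<times> X" "finite F" "F \<subseteq> far X \<V>"
    "X \<times> X \<inter> (\<Inter>(A, B)\<in>F. far_entourage X A B) \<subseteq> W"
  using assms unfolding far_generated_def by blast

lemma far_generated_subset: "W \<in> far_generated X \<V> \<Longrightarrow> W \<subseteq> X \<times> X"
  unfolding far_generated_def by blast

lemma far_entourage_in_far_generated:
  "(A, B) \<in> far X \<V> \<Longrightarrow> far_entourage X A B \<in> far_generated X \<V>"
  by (rule far_generatedI[of _ _ "{(A, B)}"]) (auto simp: far_entourage_subset)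

lemma UNIV_in_far_generated: "X \<times> X \<in> far_generated X \<V>"
  by (rule far_generatedI[of _ _ "{}"]) simp_all

lemma far_generated_mono:
  "W \<in> far_generated X \<V> \<Longrightarrow> W \<subseteq> W' \<Longrightarrow> W' \<subseteq> X \<times> X \<Longrightarrow> W' \<in> far_generated X \<V>"
  by (elim far_generatedE, rule far_generatedI) blast+

lemma far_generated_Int:
  assumes "W1 \<in> far_generated X \<V>" "W2 \<in> far_generated X \<V>"
  shows "W1 \<inter> W2 \<in> far_generated X \<V>"
proof -
  obtain F1 F2 where F1: "W1 \<subseteq> X \<times> X" "finite F1" "F1 \<subseteq> far X \<V>"
      "X \<times> X \<inter> (\<Inter>(A, B)\<in>F1. far_entourage X A B) \<subseteq> W1"
    and F2: "W2 \<subseteq> X \<times> X" "finite F2" "F2 \<subseteq> far X \<V>"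
      "X \<times> X \<inter> (\<Inter>(A, B)\<in>F2. far_entourage X A B) \<subseteq> W2"
    using assms by (elim far_generatedE)
  show ?thesis
    by (rule far_generatedI[of _ _ "F1 \<union> F2"]) (use F1 F2 in \<open>auto simp: INT_Un\<close>)
qed

lemma Id_on_subset_far_entourage:
  "quasi_uniformity X \<V> \<Longrightarrow> (A, B) \<in> far X \<V> \<Longrightarrow> Id_on X \<subseteq> far_entourage X A B"
  using far_disjoint unfolding far_entourage_def by fastforce

lemma far_generated_refl:
  assumes qu: "quasi_uniformity X \<V>" and "W \<in> far_generated X \<V>"
  shows "Id_on X \<subseteq> W"
proof -
  obtain F where F: "W \<subseteq> X \<times> X" "finite F" "F \<subseteq> far X \<V>"
    "X \<times> X \<inter> (\<Inter>(A, B)\<in>F. far_entourage X A B) \<subseteq> W"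
    using assms(2) by (rule far_generatedE)
  have "Id_on X \<subseteq> X \<times> X \<inter> (\<Inter>(A, B)\<in>F. far_entourage X A B)"
    using Id_on_subset_far_entourage[OF qu] F(3) by (fastforce simp: Id_on_def)
  with F(4) show ?thesis by (rule order_trans[rotated])
qed

text \<open>If \<open>U O U\<close> separates \<open>(A, B)\<close>, then both \<open>(A, X - U(A))\<close> and \<open>(U(A), B)\<close> are far.\<close>

lemma far_entourage_sqrt:
  assumes qu: "quasi_uniformity X \<V>" and AB: "(A, B) \<in> far X \<V>"
  shows "\<exists>W\<in>far_generated X \<V>. W O W \<subseteq> far_entourage X A B"
proof -
  obtain U0 where U0: "U0 \<in> \<V>" "(A \<times> B) \<inter> U0 = {}"
    using AB unfolding far_def by blast
  obtain U where U: "U \<in> \<V>" "U O U \<subseteq> U0"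
    using quasi_uniformity_sqrt[OF qu U0(1)] by blast
  define C where "C = U `` A"
  have UX: "U \<subseteq> X \<times> X" using quasi_uniformity_subset[OF qu U(1)] .
  have "(A \<times> (X - C)) \<inter> U = {}" "(C \<times> B) \<inter> U = {}"
    using U U0(2) unfolding C_def by blast+
  then have "(A, X - C) \<in> far X \<V>" "(C, B) \<in> far X \<V>"
    using AB UX U(1) unfolding far_def C_def by blast+
  then have "far_entourage X A (X - C) \<inter> far_entourage X C B \<in> far_generated X \<V>"
    by (intro far_generated_Int far_entourage_in_far_generated)
  moreover have "(far_entourage X A (X - C) \<inter> far_entourage X C B)
      O (far_entourage X A (X - C) \<inter> far_entourage X C B) \<subseteq> far_entourage X A B"
    unfolding far_entourage_def by blast
  ultimately show ?thesis by blast
qed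

lemma far_generated_sqrt:
  assumes qu: "quasi_uniformity X \<V>" and "W \<in> far_generated X \<V>"
  shows "\<exists>W'\<in>far_generated X \<V>. W' O W' \<subseteq> W"
proof -
  obtain F where F: "W \<subseteq> X \<times> X" "finite F" "F \<subseteq> far X \<V>"
    "X \<times> X \<inter> (\<Inter>(A, B)\<in>F. far_entourage X A B) \<subseteq> W"
    using assms(2) by (rule far_generatedE)
  have "\<forall>p\<in>F. \<exists>W'\<in>far_generated X \<V>. W' O W' \<subseteq> far_entourage X (fst p) (snd p)"
    using far_entourage_sqrt[OF qu] F(3) by auto
  then obtain g where g: "\<forall>p\<in>F. g p \<in> far_generated X \<V> \<and>
      g p O g p \<subseteq> far_entourage X (fst p) (snd p)"
    by metis
  define W' where "W' = X \<times> X \<inter> (\<Inter>p\<in>F. g p)"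
  have "W' O W' \<subseteq> X \<times> X \<inter> (\<Inter>p\<in>F. far_entourage X (fst p) (snd p))"
    unfolding W'_def using g by (intro relcomp_INT_subset) blast
  also have "\<dots> \<subseteq> W"
    using F(4) by (simp add: split_beta)
  finally have "W' O W' \<subseteq> W" .
  moreover have "W' \<in> far_generated X \<V>" unfolding W'_def
    using g by (intro finite_INT_closed[OF UNIV_in_far_generated far_generated_Int F(2)]) blast+
  ultimately show ?thesis by (rule bexI)
qed

lemma quasi_uniformity_far_generated:
  assumes "quasi_uniformity X \<V>"
  shows "quasi_uniformity X (far_generated X \<V>)"
proof -
  have nonempty: "far_generated X \<V> \<noteq> {}"
    using UNIV_in_far_generated by blast
  have refl: "\<forall>W\<in>far_generated X \<V>. Id_on X \<subseteq> W \<and> W \<subseteq> X \<times> X"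
    using far_generated_refl[OF assms] far_generated_subset by blast
  have mono: "\<forall>W W'. W \<in> far_generated X \<V> \<and> W \<subseteq> W' \<and> W' \<subseteq> X \<times> X \<longrightarrow>
      W' \<in> far_generated X \<V>"
    using far_generated_mono by blast
  have Int: "\<forall>W\<in>far_generated X \<V>. \<forall>W'\<in>far_generated X \<V>. W \<inter> W' \<in> far_generated X \<V>"
    using far_generated_Int by blast
  have sqrt: "\<forall>W\<in>far_generated X \<V>. \<exists>W'\<in>far_generated X \<V>. W' O W' \<subseteq> W"
    using far_generated_sqrt[OF assms] by blast
  show ?thesis
    unfolding quasi_uniformity_def by (intro conjI nonempty refl mono Int sqrt)
qed

lemma Times_subset_UN_if_disjoint:
  assumes "A \<subseteq> X" "B \<subseteq> X" "(A \<times> B) \<inter> W = {}"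
    and "X \<times> X \<inter> (\<Inter>(C, D)\<in>F. far_entourage X C D) \<subseteq> W"
  shows "A \<times> B \<subseteq> (\<Union>(C, D)\<in>F. C \<times> D)"
proof
  fix p assume p: "p \<in> A \<times> B"
  then have "p \<in> X \<times> X" "p \<notin> W" using assms(1-3) by auto
  then obtain C D where "(C, D) \<in> F" "p \<notin> far_entourage X C D" using assms(4) by blast
  with \<open>p \<in> X \<times> X\<close> show "p \<in> (\<Union>(C, D)\<in>F. C \<times> D)"
    unfolding far_entourage_def by blast
qed

lemma far_far_generated:
  assumes qu: "quasi_uniformity X \<V>"
  shows "far X (far_generated X \<V>) = far X \<V>"
proof (intro set_eqI iffI; clarify)
  fix A B assume AB: "(A, B) \<in> far X \<V>"
  have "(A \<times> B) \<inter> far_entourage X A B = {}" by (rule far_entourage_disjoint)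
  with far_entourage_in_far_generated[OF AB] far_subset[OF AB]
  show "(A, B) \<in> far X (far_generated X \<V>)" unfolding far_def by blast
next
  fix A B assume AB: "(A, B) \<in> far X (far_generated X \<V>)"
  then obtain W where W: "W \<in> far_generated X \<V>" "(A \<times> B) \<inter> W = {}"
    and AX: "A \<subseteq> X" and BX: "B \<subseteq> X"
    unfolding far_def by blast
  obtain F where F: "W \<subseteq> X \<times> X" "finite F" "F \<subseteq> far X \<V>"
    "X \<times> X \<inter> (\<Inter>(C, D)\<in>F. far_entourage X C D) \<subseteq> W"
    using W(1) by (rule far_generatedE)
  have "A \<times> B \<subseteq> (\<Union>(C, D)\<in>F. C \<times> D)"
    using AX BX W(2) F(4) by (rule Times_subset_UN_if_disjoint)
  then show "(A, B) \<in> far X \<V>" by (rule far_if_covered[OF qu F(2,3) AX BX])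
qed

lemma far_generated_coarsest:
  assumes qu: "quasi_uniformity X \<W>" and "qprox X \<W> = qprox X \<V>"
  shows "far_generated X \<V> \<subseteq> \<W>"
proof
  fix W assume "W \<in> far_generated X \<V>"
  then obtain F where F: "W \<subseteq> X \<times> X" "finite F" "F \<subseteq> far X \<V>"
    "X \<times> X \<inter> (\<Inter>(A, B)\<in>F. far_entourage X A B) \<subseteq> W"
    by (rule far_generatedE)
  have "X \<times> X \<inter> (\<Inter>p\<in>F. far_entourage X (fst p) (snd p)) \<in> \<W>"
    using far_entourage_mem[OF qu assms(2)] F(3)
    by (intro finite_INT_closed[OF quasi_uniformity_UNIV[OF qu] quasi_uniformity_Int[OF qu] F(2)])
      auto
  then have "X \<times> X \<inter> (\<Inter>(A, B)\<in>F. far_entourage X A B) \<in> \<W>"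
    by (simp add: split_beta)
  then show "W \<in> \<W>" by (rule quasi_uniformity_mono[OF qu _ F(4) F(1)])
qed

lemma qu_omega_eq_far_generated:
  assumes qu: "quasi_uniformity X \<V>"
  shows "qu_omega X \<V> = far_generated X \<V>"
  unfolding qu_omega_def
proof (rule the_equality)
  have member: "far_generated X \<V> \<in> qprox_class X (qprox X \<V>)"
    using quasi_uniformity_far_generated[OF qu] qprox_eq_if_far_eq[OF far_far_generated[OF qu]]
    unfolding qprox_class_def by blast
  have coarsest: "\<forall>\<W>\<in>qprox_class X (qprox X \<V>). far_generated X \<V> \<subseteq> \<W>"
    using far_generated_coarsest unfolding qprox_class_def by blast
  from member coarsest show "far_generated X \<V> \<in> qprox_class X (qprox X \<V>) \<and>
      (\<forall>\<W>\<in>qprox_class X (qprox X \<V>). far_generated X \<V> \<subseteq> \<W>)" ..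
  fix \<W> assume "\<W> \<in> qprox_class X (qprox X \<V>) \<and>
      (\<forall>\<W>'\<in>qprox_class X (qprox X \<V>). \<W> \<subseteq> \<W>')"
  with member coarsest show "\<W> = far_generated X \<V>" by (blast intro: subset_antisym)
qed

lemma openin_transitive_Image:
  assumes "qu_compatible \<tau> \<V>" "quasi_uniformity (topspace \<tau>) \<V>" "U \<in> \<V>" "U O U \<subseteq> U"
  shows "openin \<tau> (U `` A)"
proof -
  have "U `` {x} \<subseteq> U `` A" if "x \<in> U `` A" for x
    using that assms(4) by blast
  moreover have "U `` A \<subseteq> topspace \<tau>"
    using quasi_uniformity_subset[OF assms(2,3)] by blast
  ultimately show ?thesis
    using assms(1,3) unfolding qu_compatible_def by blast
qed

lemma far_transitive_Image_complement:
  assumes "quasi_uniformity X \<V>" "U \<in> \<V>" "U O U \<subseteq> U"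
  shows "(U `` A, X - U `` A) \<in> far X \<V>"
proof -
  have "(U `` A \<times> (X - U `` A)) \<inter> U = {}" using assms(3) by blast
  moreover have "U `` A \<subseteq> X" using quasi_uniformity_subset[OF assms(1,2)] by blast
  ultimately show ?thesis using assms(2) unfolding far_def by blast
qed

theorem lemma2p2:
  fixes \<tau> :: "'a topology" and \<V> :: "('a \<times> 'a) set set" and U :: "('a \<times> 'a) set"
    and A :: "'a set"
  assumes "\<V> \<in> Tqu \<tau>"
    and "U \<in> \<V>" and "U O U \<subseteq> U"
    and "A \<subseteq> topspace \<tau>"
  shows "U `` A \<in> Bset \<tau> (qu_omega (topspace \<tau>) \<V>)"
proof -
  have qu: "quasi_uniformity (topspace \<tau>) \<V>" and comp: "qu_compatible \<tau> \<V>"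
    using assms(1) unfolding Tqu_def by auto
  have "openin \<tau> (U `` A)"
    using comp qu assms(2,3) by (rule openin_transitive_Image)
  moreover have "far_entourage (topspace \<tau>) (U `` A) (topspace \<tau> - U `` A)
      \<in> far_generated (topspace \<tau>) \<V>"
    using far_transitive_Image_complement[OF qu assms(2,3)] by (rule far_entourage_in_far_generated)
  ultimately show ?thesis
    unfolding Bset_def qu_omega_eq_far_generated[OF qu]
    by (simp add: far_entourage_complement openin_subset)
qed

end
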